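(* In $A_n$, for $1\le i\le n-1$ and $a\in\mathbb{N}_0$, \[ \omega_{i+1}^a = x_{i+1}T_i\,\omega_i^a\,T_i - T_i\,\omega_i^a\,T_i\,x_i . \]
   Context: $A_n$ is the bigraded $\mathbb{Z}$-superalgebra generated by even $x_1,\dots,x_n$, even $T_1,\dots,T_{n-1}$ and odd $\omega_1,\dots,\omega_n$ with relations: $T_i^2=0$, $T_iT_j=T_jT_i$ ($|i-j|>1$), $T_iT_{i+1}T_i=T_{i+1}T_iT_{i+1}$, $x_ix_j=x_jx_i$, $T_ix_j=x_jT_i$ ($j\neq i,i+1$), $T_ix_i-x_{i+1}T_i=1$, $T_ix_{i+1}-x_iT_i=-1$, $\omega_i\omega_j=-\omega_j\omega_i$, $x_i\omega_j=\omega_jx_i$, $T_i\omega_j=\omega_jT_i$ ($i\ne j$), $T_i(\omega_i-x_{i+1}\omega_{i+1})=(\omega_i-x_{i+1}\omega_{i+1})T_i$ (equivalently, operators on $\mathbb{Z}[x]\otimes\bigwedge^\bullet(\omega)$ generated by Demazure operators and multiplications). Labeled elements: $\omega_k^0=\omega_k$, $\omega_0^a=0$, $\omega_k^a=\omega_{k-1}^{a-1}-x_k\omega_k^{a-1}$ for $a\ge1$. *)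

theory Defs
  imports Main
begin

text \<open>We state identities in A_n
  via its universal property: an identity holds in A_n iff it holds for every ring
  (Z-algebra) with elements x_1..x_n, T_1..T_(n-1), w_1..w_n satisfying the defining
  relations.  Generators are indexed from 1; values at other indices are irrelevant.\<close>

definition A_rels :: "nat \<Rightarrow> (nat \<Rightarrow> 'a::ring_1) \<Rightarrow> (nat \<Rightarrow> 'a) \<Rightarrow> (nat \<Rightarrow> 'a) \<Rightarrow> bool" where
  "A_rels n x T w \<longleftrightarrow>
     (\<forall>i\<in>{1..<n}. T i * T i = 0)
   \<and> (\<forall>i\<in>{1..<n}. \<forall>j\<in>{1..<n}. (i + 1 < j \<or> j + 1 < i) \<longrightarrow> T i * T j = T j * T i)
   \<and> (\<forall>i. 1 \<le> i \<and> i + 1 < n \<longrightarrow> T i * T (i+1) * T i = T (i+1) * T i * T (i+1))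
   \<and> (\<forall>i\<in>{1..n}. \<forall>j\<in>{1..n}. x i * x j = x j * x i)
   \<and> (\<forall>i\<in>{1..<n}. \<forall>j\<in>{1..n}. j \<noteq> i \<and> j \<noteq> i + 1 \<longrightarrow> T i * x j = x j * T i)
   \<and> (\<forall>i\<in>{1..<n}. T i * x i - x (i+1) * T i = 1)
   \<and> (\<forall>i\<in>{1..<n}. T i * x (i+1) - x i * T i = -1)
   \<and> (\<forall>i\<in>{1..n}. \<forall>j\<in>{1..n}. w i * w j = - (w j * w i))
   \<and> (\<forall>i\<in>{1..n}. \<forall>j\<in>{1..n}. x i * w j = w j * x i)
   \<and> (\<forall>i\<in>{1..<n}. \<forall>j\<in>{1..n}. i \<noteq> j \<longrightarrow> T i * w j = w j * T i)
   \<and> (\<forall>i\<in>{1..<n}. T i * (w i - x (i+1) * w (i+1)) = (w i - x (i+1) * w (i+1)) * T i)"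

fun omega_lab :: "(nat \<Rightarrow> 'a::ring_1) \<Rightarrow> (nat \<Rightarrow> 'a) \<Rightarrow> nat \<Rightarrow> nat \<Rightarrow> 'a" where
  "omega_lab x w k 0 = (if k = 0 then 0 else w k)"
| "omega_lab x w k (Suc a) =
     (if k = 0 then 0 else omega_lab x w (k - 1) a - x k * omega_lab x w k a)"

end

theory Submission
  imports Defs
begin

text \<open>Put \<open>\<Phi>(u) = x(i+1) T(i) u T(i) - T(i) u T(i) x(i)\<close>.  The nil-Hecke relations between
  \<open>T(i)\<close>, \<open>x(i)\<close>, \<open>x(i+1)\<close> alone show that \<open>\<Phi>\<close> kills everything commuting with \<open>T(i)\<close>,
  sends \<open>x(i+1) v\<close> to \<open>v\<close> when \<open>v\<close> commutes with \<open>T(i)\<close> and \<open>x(i)\<close>, and satisfies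
  \<open>\<Phi>(x(i) y) = x(i+1) \<Phi>(y) - y\<close> when \<open>y\<close> commutes with \<open>x(i+1)\<close>.  As
  \<open>\<omega>(i) - x(i+1) \<omega>(i+1)\<close> and every \<open>\<omega>(i-1)^a\<close> commute with \<open>T(i)\<close>, this gives
  \<open>\<Phi>(\<omega>(i)^0) = \<omega>(i+1)^0\<close> and \<open>\<Phi>(\<omega>(i)^(a+1)) = \<omega>(i)^a - x(i+1) \<Phi>(\<omega>(i)^a)\<close>, which is the
  recursion defining \<open>\<omega>(i+1)^(a+1)\<close>.\<close>

locale nil_hecke_2 =
  fixes T x1 x2 :: "'a::ring_1"
  assumes T_square: "T * T = 0"
    and T_x1: "T * x1 - x2 * T = 1"
    and T_x2: "T * x2 - x1 * T = -1"
begin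

definition sandwich :: "'a \<Rightarrow> 'a" where
  "sandwich u = x2 * T * u * T - T * u * T * x1"

lemma sandwich_diff: "sandwich (u - v) = sandwich u - sandwich v"
  unfolding sandwich_def by (simp add: algebra_simps)

lemma sandwich_commute_T:
  assumes "T * u = u * T"
  shows "sandwich u = 0"
proof -
  have "T * u * T = 0"
    by (metis assms T_square mult.assoc mult_zero_right)
  then show ?thesis
    unfolding sandwich_def by (simp add: mult.assoc)
qed

lemma T_x2_T: "T * x2 * T = - T"
proof -
  have "T * x2 = x1 * T - 1"
    using T_x2 by (metis add_diff_cancel_right' diff_add_cancel diff_minus_eq_add minus_diff_eq add.commute)
  then have "T * x2 * T = (x1 * T - 1) * T"
    by simp
  also have "\<dots> = x1 * (T * T) - T"
    by (simp add: algebra_simps)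
  finally show ?thesis
    using T_square by simp
qed

lemma sandwich_x2_mult:
  assumes vT: "T * v = v * T" and vx1: "x1 * v = v * x1"
  shows "sandwich (x2 * v) = v"
proof -
  have "sandwich (x2 * v) = x2 * (T * x2 * T) * v - (T * x2 * T) * x1 * v"
    unfolding sandwich_def by (metis mult.assoc vT vx1)
  also have "\<dots> = (T * x1 - x2 * T) * v"
    unfolding T_x2_T by (simp add: algebra_simps)
  finally show ?thesis
    using T_x1 by simp
qed

lemma sandwich_x1_mult:
  assumes yx2: "x2 * y = y * x2"
  shows "sandwich (x1 * y) = x2 * sandwich y - y"
proof -
  have Tx1: "T * x1 = 1 + x2 * T"
    using T_x1 by (simp add: algebra_simps)
  have "sandwich (x1 * y) = x2 * ((T * x1) * y) * T - ((T * x1) * y) * T * x1"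
    unfolding sandwich_def by (simp add: mult.assoc)
  also have "\<dots> = x2 * sandwich y + (x2 * y * T - y * T * x1)"
    unfolding sandwich_def Tx1 by (simp add: algebra_simps)
  also have "y * T * x1 = y + x2 * y * T"
    by (metis Tx1 distrib_left mult_1_right mult.assoc yx2)
  finally show ?thesis
    by simp
qed

end

lemma omega_lab_commute:
  fixes x w :: "nat \<Rightarrow> 'a::ring_1"
  assumes "\<And>j. 1 \<le> j \<Longrightarrow> j \<le> k \<Longrightarrow> c * x j = x j * c"
    and "\<And>j. 1 \<le> j \<Longrightarrow> j \<le> k \<Longrightarrow> c * w j = w j * c"
  shows "c * omega_lab x w k a = omega_lab x w k a * c"
  using assms
proof (induction a arbitrary: k)
  case 0
  then show ?case by simp
next
  case (Suc a)
  show ?case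
  proof (cases "k = 0")
    case False
    have "c * omega_lab x w (k - 1) a = omega_lab x w (k - 1) a * c"
      using Suc by simp
    moreover have "c * (x k * omega_lab x w k a) = x k * omega_lab x w k a * c"
      using Suc False by (simp add: mult.assoc flip: mult.assoc[of c])
    ultimately show ?thesis
      using False by (simp add: algebra_simps)
  qed simp
qed

lemma A_rels_nil_hecke_2:
  assumes "A_rels n x T w" and "i \<in> {1..<n}"
  shows "nil_hecke_2 (T i) (x i) (x (i + 1))"
  using assms unfolding A_rels_def nil_hecke_2_def by auto

lemma A_rels_omega_lab_commute_x:
  assumes "A_rels n x T w" and "j \<in> {1..n}" and "k \<le> n"
  shows "x j * omega_lab x w k a = omega_lab x w k a * x j"
  by (rule omega_lab_commute) (use assms in \<open>auto simp: A_rels_def\<close>)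

lemma A_rels_omega_lab_commute_T:
  assumes "A_rels n x T w" and "k < i" and "i < n"
  shows "T i * omega_lab x w k a = omega_lab x w k a * T i"
  by (rule omega_lab_commute) (use assms in \<open>auto simp: A_rels_def\<close>)

theorem lemma2p4:
  fixes x T w :: "nat \<Rightarrow> 'a::ring_1" and n i a :: nat
  assumes "A_rels n x T w"
    and "1 \<le> i" and "i \<le> n - 1"
  shows "omega_lab x w (i+1) a
         = x (i+1) * T i * omega_lab x w i a * T i - T i * omega_lab x w i a * T i * x i"
proof -
  have i: "i \<in> {1..<n}"
    using assms by auto
  interpret nil_hecke_2 "T i" "x i" "x (Suc i)"
    using A_rels_nil_hecke_2[OF assms(1) i] by simp
  have "omega_lab x w (Suc i) a = sandwich (omega_lab x w i a)"
  proof (induction a)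
    case 0
    have "T i * (w i - x (Suc i) * w (Suc i)) = (w i - x (Suc i) * w (Suc i)) * T i"
      and "T i * w (Suc i) = w (Suc i) * T i" and "x i * w (Suc i) = w (Suc i) * x i"
      using assms(1) i unfolding A_rels_def by auto
    then have "sandwich (w i - x (Suc i) * w (Suc i)) = 0"
      and "sandwich (x (Suc i) * w (Suc i)) = w (Suc i)"
      by (simp_all only: sandwich_commute_T sandwich_x2_mult)
    then have "sandwich (w i) = w (Suc i)"
      by (metis sandwich_diff eq_iff_diff_eq_0)
    then show ?case
      using i by simp
  next
    case (Suc a)
    have "sandwich (omega_lab x w (i - 1) a) = 0"
      using A_rels_omega_lab_commute_T[OF assms(1), of "i - 1" i] i by (intro sandwich_commute_T) simp
    moreover have "x (Suc i) * omega_lab x w i a = omega_lab x w i a * x (Suc i)"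
      using A_rels_omega_lab_commute_x[OF assms(1)] i by simp
    ultimately show ?case
      using Suc i by (simp add: sandwich_diff sandwich_x1_mult)
  qed
  then show ?thesis
    by (simp add: sandwich_def)
qed

end
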